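(* Let $m\ge 1$ and let $X\subset\mathbb{N}_0^m$ be a finite lower set of $(\mathbb{N}_0^m,\preceq)$ with $|X|=p$. Then the $p\times p$ generalized Vandermonde matrix $V(X,X)$, whose rows are indexed by the points $\boldsymbol{x}\in X$ (viewed as points of $\mathbb{R}^m$) and whose columns are indexed by the exponents $\boldsymbol{\alpha}\in X$, with entries $\boldsymbol{x}^{\boldsymbol{\alpha}}$, is invertible.
   Context: $\preceq$ is the componentwise (product) order on $\mathbb{N}_0^m$: $\boldsymbol{y}\preceq\boldsymbol{x}$ iff $y_j\le x_j$ for all $j$. A lower set is a nonempty subset $I\subseteq\mathbb{N}_0^m$ such that $\boldsymbol{x}\in I$ and $\boldsymbol{y}\preceq\boldsymbol{x}$ imply $\boldsymbol{y}\in I$. For $\boldsymbol{x}\in\mathbb{R}^m$ and $\boldsymbol{\alpha}\in\mathbb{N}_0^m$, $\boldsymbol{x}^{\boldsymbol{\alpha}}=x_1^{\alpha_1}\cdots x_m^{\alpha_m}$ with the convention $0^0=1$. *)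

theory Defs
  imports Main "HOL.Real"
begin

text \<open>Points of N_0^m are represented as lists of naturals of length m.\<close>

definition prec :: "nat list \<Rightarrow> nat list \<Rightarrow> bool" where
  "prec y x \<longleftrightarrow> length y = length x \<and> (\<forall>j<length x. y ! j \<le> x ! j)"

definition lower_set :: "nat \<Rightarrow> nat list set \<Rightarrow> bool" where
  "lower_set m I \<longleftrightarrow> I \<noteq> {} \<and> I \<subseteq> {x. length x = m} \<and>
     (\<forall>x\<in>I. \<forall>y. length y = m \<and> prec y x \<longrightarrow> y \<in> I)"

text \<open>x^alpha = prod_j x_j^alpha_j, with the point x viewed in R^m (note 0^0 = 1).\<close>
definition mono_pow :: "nat list \<Rightarrow> nat list \<Rightarrow> real" where
  "mono_pow x \<alpha> = (\<Prod>j<length x. (real (x ! j)) ^ (\<alpha> ! j))"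

text \<open>Generalized Vandermonde matrix V(X,A): rows indexed by x in X, columns by alpha in A.\<close>
definition gen_vandermonde :: "nat list \<Rightarrow> nat list \<Rightarrow> real" where
  "gen_vandermonde x \<alpha> = mono_pow x \<alpha>"

definition invertible_on :: "'a set \<Rightarrow> ('a \<Rightarrow> 'a \<Rightarrow> real) \<Rightarrow> bool" where
  "invertible_on S A \<longleftrightarrow> (\<exists>W.
      (\<forall>r\<in>S. \<forall>c\<in>S. (\<Sum>k\<in>S. A r k * W k c) = (if r = c then 1 else 0)) \<and>
      (\<forall>r\<in>S. \<forall>c\<in>S. (\<Sum>k\<in>S. W r k * A k c) = (if r = c then 1 else 0)))"

end

theory Submission
  imports Defs "Jordan_Normal_Form.Determinant" "HOL-Combinatorics.Stirling"
begin

text \<open>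
  Expanding every coordinate power in falling factorials, \<open>t^a = \<Sum>b\<le>a. S(a,b) (t)_b\<close> with
  Stirling numbers of the second kind, factors \<open>V(X,X) = F S\<close> with
  \<open>F(x,\<beta>) = \<Prod>j. (x_j)_\<beta>_j\<close> and \<open>S(\<beta>,\<alpha>) = \<Prod>j. S(\<alpha>_j,\<beta>_j)\<close>; the exponents \<open>\<beta> \<preceq> \<alpha>\<close>
  occurring in the expansion of \<open>x^\<alpha>\<close> stay in \<open>X\<close> because \<open>X\<close> is a lower set.
  Since \<open>(n)_b = 0\<close> for \<open>b > n\<close>, \<open>F(x,\<beta>) \<noteq> 0\<close> forces \<open>\<beta> \<preceq> x\<close>, and \<open>S(\<beta>,\<alpha>) \<noteq> 0\<close> forces
  \<open>\<beta> \<preceq> \<alpha>\<close>. Listing \<open>X\<close> by increasing total degree thus makes both factors triangular,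
  with diagonals \<open>(x)_x \<noteq> 0\<close> and \<open>S(\<alpha>,\<alpha>) = 1\<close>, so \<open>det V(X,X) \<noteq> 0\<close>.
\<close>

definition matrix_on :: "'a list \<Rightarrow> ('a \<Rightarrow> 'a \<Rightarrow> 'b) \<Rightarrow> 'b mat" where
  "matrix_on xs A = mat (length xs) (length xs) (\<lambda>(i, j). A (xs ! i) (xs ! j))"

lemma matrix_on_carrier_mat: "matrix_on xs A \<in> carrier_mat (length xs) (length xs)"
  by (simp add: matrix_on_def)

lemma dim_row_matrix_on [simp]: "dim_row (matrix_on xs A) = length xs"
  and dim_col_matrix_on [simp]: "dim_col (matrix_on xs A) = length xs"
  by (simp_all add: matrix_on_def)

lemma index_matrix_on [simp]:
  "i < length xs \<Longrightarrow> j < length xs \<Longrightarrow> matrix_on xs A $$ (i, j) = A (xs ! i) (xs ! j)"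
  by (simp add: matrix_on_def)

lemma sum_set_distinct_conv_nth:
  "distinct xs \<Longrightarrow> (\<Sum>k\<in>set xs. g k) = (\<Sum>j<length xs. g (xs ! j))"
  by (simp add: sum.distinct_set_conv_list sum_list_sum_nth atLeast0LessThan)

lemma index_mult_matrix_on:
  assumes "i < length xs" "j < length xs"
  shows "(matrix_on xs A * matrix_on xs B) $$ (i, j) = (\<Sum>k<length xs. A (xs ! i) (xs ! k) * B (xs ! k) (xs ! j))"
  using assms by (simp add: matrix_on_def scalar_prod_def atLeast0LessThan)

lemma matrix_on_mult:
  fixes A B C :: "'a \<Rightarrow> 'a \<Rightarrow> 'b :: semiring_0"
  assumes "distinct xs"
    and "\<And>r c. r \<in> set xs \<Longrightarrow> c \<in> set xs \<Longrightarrow> C r c = (\<Sum>k\<in>set xs. A r k * B k c)"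
  shows "matrix_on xs C = matrix_on xs A * matrix_on xs B"
proof (rule eq_matI)
  fix i j assume "i < dim_row (matrix_on xs A * matrix_on xs B)" "j < dim_col (matrix_on xs A * matrix_on xs B)"
  then have "i < length xs" "j < length xs"
    by simp_all
  then show "matrix_on xs C $$ (i, j) = (matrix_on xs A * matrix_on xs B) $$ (i, j)"
    using assms by (simp add: index_mult_matrix_on sum_set_distinct_conv_nth del: index_mult_mat)
qed simp_all

lemma det_matrix_on_transpose: "det (matrix_on xs (\<lambda>r c. A c r)) = det (matrix_on xs A)"
proof -
  have "matrix_on xs (\<lambda>r c. A c r) = transpose_mat (matrix_on xs A)"
    by (intro eq_matI) (auto simp: matrix_on_def)
  then show ?thesis
    by (simp add: det_transpose[OF matrix_on_carrier_mat])
qed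

lemma det_matrix_on_triangular_neq_0:
  fixes f :: "'a \<Rightarrow> 'c :: linorder" and A :: "'a \<Rightarrow> 'a \<Rightarrow> 'b :: idom"
  assumes "distinct xs" "sorted (map f xs)"
    and "\<And>r c. r \<in> set xs \<Longrightarrow> c \<in> set xs \<Longrightarrow> r \<noteq> c \<Longrightarrow> A r c \<noteq> 0 \<Longrightarrow> f r < f c"
    and "\<And>r. r \<in> set xs \<Longrightarrow> A r r \<noteq> 0"
  shows "det (matrix_on xs A) \<noteq> 0"
proof -
  have "upper_triangular (matrix_on xs A)"
  proof (unfold upper_triangular_def, intro allI impI)
    fix i j assume "i < dim_row (matrix_on xs A)" "j < i"
    then have ij: "i < length xs" "j < i" by simp_all
    have "f (xs ! j) \<le> f (xs ! i)"
      using sorted_nth_mono[OF assms(2), of j i] ij by simp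
    moreover have "xs ! i \<noteq> xs ! j"
      using assms(1) ij by (simp add: nth_eq_iff_index_eq)
    ultimately show "matrix_on xs A $$ (i, j) = 0"
      using assms(3)[of "xs ! i" "xs ! j"] ij by fastforce
  qed
  then have "det (matrix_on xs A) = prod_list (diag_mat (matrix_on xs A))"
    by (rule det_upper_triangular[OF _ matrix_on_carrier_mat])
  also have "\<dots> \<noteq> 0"
    using assms(4) by (auto simp: prod_list_zero_iff diag_mat_def matrix_on_def)
  finally show ?thesis .
qed

lemma invertible_on_if_det_matrix_on_neq_0:
  fixes A :: "'a \<Rightarrow> 'a \<Rightarrow> real"
  assumes "distinct xs" "det (matrix_on xs A) \<noteq> 0"
  shows "invertible_on (set xs) A"
proof -
  let ?n = "length xs"
  obtain B where B: "B \<in> carrier_mat ?n ?n" "matrix_on xs A * B = 1\<^sub>m ?n" "B * matrix_on xs A = 1\<^sub>m ?n"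
    using det_non_zero_imp_unit[OF matrix_on_carrier_mat assms(2)]
    by (auto simp: Units_def ring_mat_def)
  define idx where "idx = inv_into {..<?n} ((!) xs)"
  have idx: "idx (xs ! i) = i" if "i < ?n" for i
    using assms(1) that unfolding idx_def by (intro inv_into_f_f) (auto simp: inj_on_nth)
  show ?thesis
  unfolding invertible_on_def
  proof (intro exI[of _ "\<lambda>r c. B $$ (idx r, idx c)"] conjI ballI)
    fix r c assume "r \<in> set xs" "c \<in> set xs"
    then obtain i j where ij: "i < ?n" "j < ?n" "r = xs ! i" "c = xs ! j"
      by (auto simp: in_set_conv_nth)
    have delta: "1\<^sub>m ?n $$ (i, j) = (if r = c then 1 else 0)"
      using ij assms(1) by (simp add: nth_eq_iff_index_eq)
    have "(\<Sum>k\<in>set xs. A r k * B $$ (idx k, idx c)) = (matrix_on xs A * B) $$ (i, j)"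
      using B(1) ij by (simp add: sum_set_distinct_conv_nth[OF assms(1)] idx scalar_prod_def atLeast0LessThan)
    also have "\<dots> = (if r = c then 1 else 0)"
      unfolding B(2) using delta ij by simp
    finally show "(\<Sum>k\<in>set xs. A r k * B $$ (idx k, idx c)) = (if r = c then 1 else 0)" .
    have "(\<Sum>k\<in>set xs. B $$ (idx r, idx k) * A k c) = (B * matrix_on xs A) $$ (i, j)"
      using B(1) ij by (simp add: sum_set_distinct_conv_nth[OF assms(1)] idx scalar_prod_def atLeast0LessThan)
    also have "\<dots> = (if r = c then 1 else 0)"
      unfolding B(3) using delta ij by simp
    finally show "(\<Sum>k\<in>set xs. B $$ (idx r, idx k) * A k c) = (if r = c then 1 else 0)" .
  qed
qed

definition falling_factorial :: "nat \<Rightarrow> 'a :: comm_ring_1 \<Rightarrow> 'a" where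
  "falling_factorial k x = (\<Prod>i<k. x - of_nat i)"

lemma falling_factorial_Suc: "falling_factorial (Suc k) x = falling_factorial k x * (x - of_nat k)"
  by (simp add: falling_factorial_def)

lemma falling_factorial_of_nat_eq_0: "n < k \<Longrightarrow> falling_factorial k (of_nat n) = 0"
  unfolding falling_factorial_def by (rule prod_zero) auto

lemma falling_factorial_of_nat_self_neq_0:
  "falling_factorial n (of_nat n :: 'a :: {idom, ring_char_0}) \<noteq> 0"
  by (auto simp: falling_factorial_def)

lemma power_eq_sum_Stirling_falling_factorial:
  fixes x :: "'a :: comm_ring_1"
  shows "x ^ n = (\<Sum>k\<le>n. of_nat (Stirling n k) * falling_factorial k x)"
proof (induction n)
  case 0
  then show ?case by (simp add: falling_factorial_def)
next
  case (Suc n)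
  define h where "h k = of_nat k * of_nat (Stirling n k) * falling_factorial k x" for k
  have h_shift: "(\<Sum>k\<le>n. h (Suc k)) = (\<Sum>k\<le>n. h k)"
  proof -
    have "(\<Sum>k\<le>Suc n. h k) = h 0 + (\<Sum>k\<le>n. h (Suc k))"
      by (rule sum.atMost_Suc_shift)
    moreover have "h 0 = 0" "h (Suc n) = 0"
      by (simp_all add: h_def)
    ultimately show ?thesis
      by simp
  qed
  \<comment> \<open>uses x (x)_k = (x)_(k+1) + k (x)_k; the Stirling recurrence then collects the terms\<close>
  have "x ^ Suc n = (\<Sum>k\<le>n. of_nat (Stirling n k) * falling_factorial (Suc k) x) + (\<Sum>k\<le>n. h k)"
    by (simp add: Suc sum_distrib_left sum.distrib[symmetric] falling_factorial_Suc h_def algebra_simps)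
  also have "\<dots> = (\<Sum>k\<le>n. of_nat (Stirling n k) * falling_factorial (Suc k) x) + (\<Sum>k\<le>n. h (Suc k))"
    by (simp only: h_shift)
  also have "\<dots> = (\<Sum>k\<le>n. of_nat (Stirling (Suc n) (Suc k)) * falling_factorial (Suc k) x)"
    by (simp add: sum.distrib[symmetric] h_def algebra_simps)
  also have "\<dots> = (\<Sum>k\<le>Suc n. of_nat (Stirling (Suc n) k) * falling_factorial k x)"
    by (subst sum.atMost_Suc_shift) simp
  finally show ?case .
qed

definition falling_monomial :: "nat list \<Rightarrow> nat list \<Rightarrow> real" where
  "falling_monomial x \<beta> = (\<Prod>j<length x. falling_factorial (\<beta> ! j) (real (x ! j)))"

definition Stirling_coeff :: "nat list \<Rightarrow> nat list \<Rightarrow> real" where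
  "Stirling_coeff \<beta> \<alpha> = (\<Prod>j<length \<alpha>. real (Stirling (\<alpha> ! j) (\<beta> ! j)))"

lemma prod_sum_eq_sum_prec:
  fixes g :: "nat \<Rightarrow> nat \<Rightarrow> 'a :: comm_semiring_1"
  shows "(\<Prod>j<length \<alpha>. \<Sum>k\<le>\<alpha> ! j. g j k) = (\<Sum>\<beta> | prec \<beta> \<alpha>. \<Prod>j<length \<alpha>. g j (\<beta> ! j))"
proof -
  let ?n = "length \<alpha>"
  have "(\<Prod>j<?n. \<Sum>k\<le>\<alpha> ! j. g j k) = (\<Sum>h\<in>PiE {..<?n} (\<lambda>j. {..\<alpha> ! j}). \<Prod>j<?n. g j (h j))"
    by (rule prod_sum_PiE) auto
  also have "\<dots> = (\<Sum>\<beta> | prec \<beta> \<alpha>. \<Prod>j<?n. g j (\<beta> ! j))"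
  proof (rule sum.reindex_bij_witness[of _ "\<lambda>\<beta>. restrict ((!) \<beta>) {..<?n}" "\<lambda>h. map h [0..<?n]"])
    fix h assume h: "h \<in> PiE {..<?n} (\<lambda>j. {..\<alpha> ! j})"
    then show "restrict ((!) (map h [0..<?n])) {..<?n} = h"
      by (auto simp: PiE_def extensional_def fun_eq_iff)
    show "map h [0..<?n] \<in> {\<beta>. prec \<beta> \<alpha>}"
      using h by (auto simp: prec_def)
    show "(\<Prod>j<?n. g j (map h [0..<?n] ! j)) = (\<Prod>j<?n. g j (h j))"
      by simp
  next
    fix \<beta> assume "\<beta> \<in> {\<beta>. prec \<beta> \<alpha>}"
    then show "map (restrict ((!) \<beta>) {..<?n}) [0..<?n] = \<beta>"
      and "restrict ((!) \<beta>) {..<?n} \<in> PiE {..<?n} (\<lambda>j. {..\<alpha> ! j})"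
      by (auto simp: prec_def intro: nth_equalityI)
  qed
  finally show ?thesis .
qed

lemma mono_pow_eq_sum_prec:
  assumes "length x = length \<alpha>"
  shows "mono_pow x \<alpha> = (\<Sum>\<beta> | prec \<beta> \<alpha>. falling_monomial x \<beta> * Stirling_coeff \<beta> \<alpha>)"
proof -
  have "mono_pow x \<alpha> = (\<Prod>j<length \<alpha>. \<Sum>k\<le>\<alpha> ! j. real (Stirling (\<alpha> ! j) k) * falling_factorial k (real (x ! j)))"
    by (simp add: mono_pow_def assms power_eq_sum_Stirling_falling_factorial)
  also have "\<dots> = (\<Sum>\<beta> | prec \<beta> \<alpha>. falling_monomial x \<beta> * Stirling_coeff \<beta> \<alpha>)"
    by (simp add: prod_sum_eq_sum_prec falling_monomial_def Stirling_coeff_def assms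
        prod.distrib[symmetric] mult.commute)
  finally show ?thesis .
qed

lemma prec_if_Stirling_coeff_neq_0:
  assumes "length \<beta> = length \<alpha>" "Stirling_coeff \<beta> \<alpha> \<noteq> 0"
  shows "prec \<beta> \<alpha>"
proof (rule ccontr)
  assume "\<not> prec \<beta> \<alpha>"
  then obtain j where "j < length \<alpha>" "\<alpha> ! j < \<beta> ! j"
    using assms(1) by (auto simp: prec_def not_le)
  then have "Stirling_coeff \<beta> \<alpha> = 0"
    unfolding Stirling_coeff_def by (intro prod_zero) (auto intro!: bexI[of _ j])
  with assms(2) show False
    by simp
qed

lemma Stirling_coeff_self [simp]: "Stirling_coeff \<alpha> \<alpha> = 1"
  by (simp add: Stirling_coeff_def)

lemma prec_if_falling_monomial_neq_0:
  assumes "length \<beta> = length x" "falling_monomial x \<beta> \<noteq> 0"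
  shows "prec \<beta> x"
proof (rule ccontr)
  assume "\<not> prec \<beta> x"
  then obtain j where "j < length x" "x ! j < \<beta> ! j"
    using assms(1) by (auto simp: prec_def not_le)
  then have "falling_monomial x \<beta> = 0"
    unfolding falling_monomial_def
    by (intro prod_zero) (auto intro!: bexI[of _ j] falling_factorial_of_nat_eq_0)
  with assms(2) show False
    by simp
qed

lemma falling_monomial_self_neq_0: "falling_monomial x x \<noteq> 0"
  using falling_factorial_of_nat_self_neq_0[where 'a = real]
  by (simp add: falling_monomial_def prod_zero_iff)

lemma lower_set_closed_prec:
  assumes "lower_set m X" "\<alpha> \<in> X" "prec \<beta> \<alpha>"
  shows "\<beta> \<in> X"
proof -
  have "length \<beta> = m"
    using assms by (auto simp: lower_set_def prec_def)
  with assms show ?thesis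
    unfolding lower_set_def by blast
qed

lemma gen_vandermonde_eq_sum_lower_set:
  assumes "finite X" "lower_set m X" "x \<in> X" "\<alpha> \<in> X"
  shows "gen_vandermonde x \<alpha> = (\<Sum>\<beta>\<in>X. falling_monomial x \<beta> * Stirling_coeff \<beta> \<alpha>)"
proof -
  have len: "length y = m" if "y \<in> X" for y
    using assms(2) that by (auto simp: lower_set_def)
  have "gen_vandermonde x \<alpha> = (\<Sum>\<beta> | prec \<beta> \<alpha>. falling_monomial x \<beta> * Stirling_coeff \<beta> \<alpha>)"
    using assms(3,4) by (simp add: gen_vandermonde_def mono_pow_eq_sum_prec len)
  also have "\<dots> = (\<Sum>\<beta>\<in>X. falling_monomial x \<beta> * Stirling_coeff \<beta> \<alpha>)"
  proof (rule sum.mono_neutral_left[OF assms(1)])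
    show "{\<beta>. prec \<beta> \<alpha>} \<subseteq> X"
      using assms(2,4) lower_set_closed_prec by blast
    show "\<forall>\<beta>\<in>X - {\<beta>. prec \<beta> \<alpha>}. falling_monomial x \<beta> * Stirling_coeff \<beta> \<alpha> = 0"
      using assms(4) len prec_if_Stirling_coeff_neq_0 by fastforce
  qed
  finally show ?thesis .
qed

lemma sum_list_less_if_prec:
  assumes "prec \<beta> \<alpha>" "\<beta> \<noteq> \<alpha>"
  shows "sum_list \<beta> < sum_list \<alpha>"
proof -
  have len: "length \<beta> = length \<alpha>" and le: "\<forall>j<length \<alpha>. \<beta> ! j \<le> \<alpha> ! j"
    using assms(1) by (auto simp: prec_def)
  then obtain j where "j < length \<alpha>" "\<beta> ! j \<noteq> \<alpha> ! j"
    using assms(2) by (auto simp: list_eq_iff_nth_eq)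
  then have "(\<Sum>i<length \<alpha>. \<beta> ! i) < (\<Sum>i<length \<alpha>. \<alpha> ! i)"
    using le by (intro sum_strict_mono_ex1) (auto intro!: bexI[of _ j] simp: order_le_neq_trans)
  then show ?thesis
    using len by (simp add: sum_list_sum_nth atLeast0LessThan)
qed

lemma det_matrix_on_prec_triangular_neq_0:
  fixes A :: "nat list \<Rightarrow> nat list \<Rightarrow> 'a :: idom"
  assumes "distinct xs" "sorted (map sum_list xs)"
    and "\<And>\<beta> \<alpha>. \<beta> \<in> set xs \<Longrightarrow> \<alpha> \<in> set xs \<Longrightarrow> A \<beta> \<alpha> \<noteq> 0 \<Longrightarrow> prec \<beta> \<alpha>"
    and "\<And>\<alpha>. \<alpha> \<in> set xs \<Longrightarrow> A \<alpha> \<alpha> \<noteq> 0"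
  shows "det (matrix_on xs A) \<noteq> 0"
proof (rule det_matrix_on_triangular_neq_0[OF assms(1,2)])
  fix \<beta> \<alpha> assume "\<beta> \<in> set xs" "\<alpha> \<in> set xs" "\<beta> \<noteq> \<alpha>" "A \<beta> \<alpha> \<noteq> 0"
  then show "sum_list \<beta> < sum_list \<alpha>"
    using assms(3) sum_list_less_if_prec by blast
qed (rule assms(4))

theorem proposition1:
  fixes m p :: nat and X :: "nat list set"
  assumes "m \<ge> 1"
    and "finite X"
    and "lower_set m X"
    and "card X = p"
  shows "invertible_on X gen_vandermonde"
proof -
  obtain xs where xs: "distinct xs" "set xs = X" "sorted (map sum_list xs)"
  proof -
    obtain ys where "distinct ys" "set ys = X"
      using finite_distinct_list[OF assms(2)] by blast
    then show thesis
      using that[of "sort_key sum_list ys"] by simp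
  qed
  have len: "length y = m" if "y \<in> X" for y
    using assms(3) that by (auto simp: lower_set_def)
  have "matrix_on xs gen_vandermonde = matrix_on xs falling_monomial * matrix_on xs Stirling_coeff"
  proof (rule matrix_on_mult[OF xs(1)])
    fix x \<alpha> assume "x \<in> set xs" "\<alpha> \<in> set xs"
    then show "gen_vandermonde x \<alpha> = (\<Sum>\<beta>\<in>set xs. falling_monomial x \<beta> * Stirling_coeff \<beta> \<alpha>)"
      using gen_vandermonde_eq_sum_lower_set[OF assms(2,3)] xs(2) by simp
  qed
  then have "det (matrix_on xs gen_vandermonde) =
      det (matrix_on xs (\<lambda>\<beta> x. falling_monomial x \<beta>)) * det (matrix_on xs Stirling_coeff)"
    using det_matrix_on_transpose[of xs "\<lambda>\<beta> x. falling_monomial x \<beta>"]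
    by (simp add: det_mult[OF matrix_on_carrier_mat matrix_on_carrier_mat])
  moreover have "det (matrix_on xs (\<lambda>\<beta> x. falling_monomial x \<beta>)) \<noteq> 0"
    using xs len by (intro det_matrix_on_prec_triangular_neq_0)
      (simp_all add: prec_if_falling_monomial_neq_0 falling_monomial_self_neq_0)
  moreover have "det (matrix_on xs Stirling_coeff) \<noteq> 0"
    using xs len by (intro det_matrix_on_prec_triangular_neq_0) (simp_all add: prec_if_Stirling_coeff_neq_0)
  ultimately show ?thesis
    using invertible_on_if_det_matrix_on_neq_0[OF xs(1)] xs(2) by simp
qed

end
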